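(* In every proper $4$-colouring of $K$ in which none of the $26$ copies of $H$ in $K$ contains a monochromatic triple, both $J$ and $R(J)$ have their linking vertices coloured according to option (c). In particular, all six linking diagonals are monochromatic, namely $\{L_k,L_{k+3}\}$ and $\{R(L_k),R(L_{k+3})\}$ for $k=0,1,2$.
   Context: Identify $\mathbb{R}^2$ with $\mathbb{C}$. Let $\Lambda=\{a+b e^{i\pi/3}: a,b\in\mathbb{Z}\}$. For $c\in\mathbb{C}$, let $H_c$ be the unit-distance graph on $c$ and $c+e^{i\pi k/3}$, $k=0,\dots,5$. A monochromatic triple in a colouring of a copy of $H$ is a set of three of its $7$ vertices all receiving the same colour. $J$ is the unit-distance graph on the $31$ points of $\Lambda$ of modulus at most $\sqrt7$. It is the union of the $13$ copies $H_c$, $c\in\Lambda$, $|c|\le\sqrt3$. The linking vertices of $J$ are $L_k=2e^{i\pi k/3}$ for $k\in\mathbb{Z}/6$, and a linking diagonal is a pair $\{L_k,L_{k+3}\}$. Given a colouring in which $0$ has colour $\gamma$, the linking vertices are coloured according to option (c) if there is some $k$ such that $L_k$ and $L_{k+3}$ have colour $\gamma$ and the other four linking vertices share a common colour different from $\gamma$. The same notion applies to any rotated copy of $J$ about $0$, using the images of the $L_k$. Let $R$ be the clockwise rotation about $0$ by the angle $2\arcsin(1/4)$; then $|L_k-R(L_k)|=1$. $K$ is the unit-distance graph on the $61$ points of $V(J)\cup R(V(J))$. Its $26$ copies of $H$ are the $H_c$ and the $R(H_c)$ for $c\in\Lambda$, $|c|\le\sqrt3$. *)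

theory Defs
  imports Complex_Main
begin

definition omega :: complex where "omega = cis (pi / 3)"

definition Lambda :: "complex set" where
  "Lambda = {of_int a + of_int b * omega | a b. True}"

definition Hverts :: "complex \<Rightarrow> complex set" where
  "Hverts c = insert c {c + omega ^ k | k. k < (6::nat)}"

definition VJ :: "complex set" where
  "VJ = {z \<in> Lambda. cmod z \<le> sqrt 7}"

text \<open>Centres of the 13 copies of H in J\<close>
definition centres :: "complex set" where
  "centres = {c \<in> Lambda. cmod c \<le> sqrt 3}"

definition Lk :: "nat \<Rightarrow> complex" where
  "Lk k = 2 * omega ^ k"

definition Rot :: "complex \<Rightarrow> complex" where
  "Rot z = cis (- (2 * arcsin (1/4))) * z"

definition VK :: "complex set" where
  "VK = VJ \<union> Rot ` VJ"

definition Hcopies :: "complex set set" where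
  "Hcopies = Hverts ` centres \<union> (\<lambda>c. Rot ` Hverts c) ` centres"

definition proper_4_colouring :: "complex set \<Rightarrow> (complex \<Rightarrow> nat) \<Rightarrow> bool" where
  "proper_4_colouring V f \<longleftrightarrow>
     (\<forall>z\<in>V. f z < 4) \<and> (\<forall>z\<in>V. \<forall>w\<in>V. cmod (z - w) = 1 \<longrightarrow> f z \<noteq> f w)"

definition has_mono_triple :: "(complex \<Rightarrow> nat) \<Rightarrow> complex set \<Rightarrow> bool" where
  "has_mono_triple f S \<longleftrightarrow>
     (\<exists>T\<subseteq>S. card T = 3 \<and> (\<exists>col. \<forall>z\<in>T. f z = col))"

text \<open>Option (c) for the copy of J given by the map g (identity or Rot) applied to
  the linking vertices; gamma is the colour of 0\<close>
definition option_c :: "(complex \<Rightarrow> nat) \<Rightarrow> (complex \<Rightarrow> complex) \<Rightarrow> bool" where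
  "option_c f g \<longleftrightarrow>
     (\<exists>k<6. f (g (Lk k)) = f 0 \<and> f (g (Lk (k + 3))) = f 0 \<and>
        (\<exists>\<delta>. \<delta> \<noteq> f 0 \<and> (\<forall>j<6. j mod 3 \<noteq> k mod 3 \<longrightarrow> f (g (Lk j)) = \<delta>)))"

end

theory Submission
  imports Defs "HOL-Library.Product_Plus"
begin

text \<open>
  Every copy of \<open>H\<close> is a wheel, and \<open>J\<close> is covered by the 13 wheels centred at the
  lattice points of modulus at most \<open>\<surd>3\<close>. A finite check over the 31 vertices of \<open>J\<close>
  shows that in a good colouring of \<open>J\<close>, with \<open>\<gamma>\<close> the colour of \<open>0\<close>, the linking
  vertices either follow option (c) or contain four consecutive ones of colour \<open>\<gamma>\<close>.
  Either way some linking diagonal has colour \<open>\<gamma>\<close>, and in the second case every linking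
  diagonal meets colour \<open>\<gamma>\<close>. As \<open>L\<^sub>k\<close> and \<open>R(L\<^sub>k)\<close> are adjacent in \<open>K\<close>, they are never
  both coloured \<open>\<gamma>\<close>; hence neither \<open>J\<close> nor \<open>R(J)\<close> shows four consecutive \<open>\<gamma>\<close>, and
  both follow option (c), whose diagonals are monochromatic.
\<close>

section \<open>Colour patterns on the six linking vertices\<close>

lemma all_less_four: "(\<forall>j<(4::nat). P j) \<longleftrightarrow> P 0 \<and> P 1 \<and> P 2 \<and> P 3"
  by (simp add: numeral_eq_Suc All_less_Suc conj_ac)

lemma all_less_six: "(\<forall>j<(6::nat). P j) \<longleftrightarrow> P 0 \<and> P 1 \<and> P 2 \<and> P 3 \<and> P 4 \<and> P 5"
  by (simp add: numeral_eq_Suc All_less_Suc conj_ac)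

lemma ex_less_three: "(\<exists>j<(3::nat). P j) \<longleftrightarrow> P 0 \<or> P 1 \<or> P 2"
  by (simp add: numeral_eq_Suc Ex_less_Suc disj_ac)

lemma ex_less_six: "(\<exists>j<(6::nat). P j) \<longleftrightarrow> P 0 \<or> P 1 \<or> P 2 \<or> P 3 \<or> P 4 \<or> P 5"
  by (simp add: numeral_eq_Suc Ex_less_Suc disj_ac)

definition four_consecutive :: "(nat \<Rightarrow> 'c) \<Rightarrow> 'c \<Rightarrow> bool" where
  "four_consecutive F \<gamma> \<longleftrightarrow> (\<exists>i<6. \<forall>j<4. F ((i + j) mod 6) = \<gamma>)"

definition option_c_pattern :: "(nat \<Rightarrow> 'c) \<Rightarrow> 'c \<Rightarrow> bool" where
  "option_c_pattern F \<gamma> \<longleftrightarrow>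
     (\<exists>k<3. F k = \<gamma> \<and> F (k + 3) = \<gamma> \<and>
        (\<exists>\<delta>. \<delta> \<noteq> \<gamma> \<and> (\<forall>j<6. j mod 3 \<noteq> k \<longrightarrow> F j = \<delta>)))"

lemma four_consecutive_iff:
  "four_consecutive F \<gamma> \<longleftrightarrow>
     F 0 = \<gamma> \<and> F 1 = \<gamma> \<and> F 2 = \<gamma> \<and> F 3 = \<gamma> \<or> F 1 = \<gamma> \<and> F 2 = \<gamma> \<and> F 3 = \<gamma> \<and> F 4 = \<gamma> \<or>
     F 2 = \<gamma> \<and> F 3 = \<gamma> \<and> F 4 = \<gamma> \<and> F 5 = \<gamma> \<or> F 3 = \<gamma> \<and> F 4 = \<gamma> \<and> F 5 = \<gamma> \<and> F 0 = \<gamma> \<or>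
     F 4 = \<gamma> \<and> F 5 = \<gamma> \<and> F 0 = \<gamma> \<and> F 1 = \<gamma> \<or> F 5 = \<gamma> \<and> F 0 = \<gamma> \<and> F 1 = \<gamma> \<and> F 2 = \<gamma>"
  unfolding four_consecutive_def ex_less_six all_less_four
  by (simp add: numeral_2_eq_2[symmetric])

lemma option_c_pattern_iff:
  "option_c_pattern F \<gamma> \<longleftrightarrow>
     F 0 = \<gamma> \<and> F 3 = \<gamma> \<and> F 1 \<noteq> \<gamma> \<and> F 2 = F 1 \<and> F 4 = F 1 \<and> F 5 = F 1 \<or>
     F 1 = \<gamma> \<and> F 4 = \<gamma> \<and> F 0 \<noteq> \<gamma> \<and> F 2 = F 0 \<and> F 3 = F 0 \<and> F 5 = F 0 \<or>
     F 2 = \<gamma> \<and> F 5 = \<gamma> \<and> F 0 \<noteq> \<gamma> \<and> F 1 = F 0 \<and> F 3 = F 0 \<and> F 4 = F 0"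
  unfolding option_c_pattern_def ex_less_three all_less_six
  by (simp add: numeral_2_eq_2[symmetric])

lemma four_consecutive_meets_diagonals:
  assumes "four_consecutive F \<gamma>" and "k < 3"
  shows "F k = \<gamma> \<or> F (k + 3) = \<gamma>"
proof -
  have "k = 0 \<or> k = 1 \<or> k = 2" using \<open>k < 3\<close> by arith
  then show ?thesis using assms(1) unfolding four_consecutive_iff by auto
qed

lemma ex_diagonal_of_colour:
  assumes "option_c_pattern F \<gamma> \<or> four_consecutive F \<gamma>"
  shows "\<exists>k<3. F k = \<gamma> \<and> F (k + 3) = \<gamma>"
  using assms unfolding option_c_pattern_def four_consecutive_iff ex_less_three by auto

lemma not_four_consecutive_if_disjoint:
  assumes "option_c_pattern G \<gamma> \<or> four_consecutive G \<gamma>" and "\<And>k. F k \<noteq> G k"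
  shows "\<not> four_consecutive F \<gamma>"
proof
  assume "four_consecutive F \<gamma>"
  moreover obtain k where "k < 3" "G k = \<gamma>" "G (k + 3) = \<gamma>"
    using ex_diagonal_of_colour[OF assms(1)] by blast
  ultimately show False
    using four_consecutive_meets_diagonals assms(2) by metis
qed

lemma option_c_patterns_if_disjoint:
  assumes F: "option_c_pattern F \<gamma> \<or> four_consecutive F \<gamma>"
    and G: "option_c_pattern G \<gamma> \<or> four_consecutive G \<gamma>"
    and disjoint: "\<And>k. F k \<noteq> G k"
  shows "option_c_pattern F \<gamma> \<and> option_c_pattern G \<gamma>"
  using F G not_four_consecutive_if_disjoint[OF G disjoint]
    not_four_consecutive_if_disjoint[OF F, of G] disjoint
  by metis

lemma option_c_pattern_diagonals:
  assumes "option_c_pattern F \<gamma>" and "k < 3"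
  shows "F k = F (k + 3)"
proof -
  have "k = 0 \<or> k = 1 \<or> k = 2" using \<open>k < 3\<close> by arith
  then show ?thesis using assms(1) unfolding option_c_pattern_iff by auto
qed

lemma option_c_if_pattern:
  assumes "option_c_pattern (\<lambda>k. f (g (Lk k))) (f 0)"
  shows "option_c f g"
  using assms unfolding option_c_pattern_def option_c_def by fastforce

section \<open>Lattice coordinates\<close>

definition lattice_pt :: "int \<times> int \<Rightarrow> complex" where
  "lattice_pt v = of_int (fst v) + of_int (snd v) * omega"

definition lattice_norm :: "int \<times> int \<Rightarrow> int" where
  "lattice_norm v = fst v ^ 2 + fst v * snd v + snd v ^ 2"

definition unit_step :: "nat \<Rightarrow> int \<times> int" where
  "unit_step k = [(1, 0), (0, 1), (-1, 1), (-1, 0), (0, -1), (1, -1)] ! (k mod 6)"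

lemma omega_eq: "omega = Complex (1 / 2) (sqrt 3 / 2)"
  by (simp add: omega_def complex_eq_iff cos_60 sin_60)

lemma norm_omega [simp]: "cmod omega = 1"
  by (simp add: omega_def)

lemma omega_cube: "omega ^ 3 = -1"
  by (simp add: omega_def DeMoivre)

lemma omega_square: "omega ^ 2 = omega - 1"
  by (simp add: omega_eq complex_eq_iff power2_eq_square)

lemma omega_power_4: "omega ^ 4 = - omega"
  using omega_cube by (simp add: power_Suc2[of omega 3, simplified])

lemma omega_power_5: "omega ^ 5 = 1 - omega"
proof -
  have "omega ^ 5 = omega ^ 3 * omega ^ 2"
    by (simp flip: power_add)
  then show ?thesis
    by (simp add: omega_cube omega_square)
qed

lemma omega_power_mod: "omega ^ (k mod 6) = omega ^ k"
proof -
  have "omega ^ 6 = (omega ^ 3)\<^sup>2"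
    by (simp flip: power_mult)
  then have "omega ^ 6 = 1"
    by (simp add: omega_cube)
  then have "omega ^ k = (omega ^ 6) ^ (k div 6) * omega ^ (k mod 6)"
    by (metis mult_div_mod_eq power_add power_mult)
  with \<open>omega ^ 6 = 1\<close> show ?thesis by simp
qed

lemma omega_square_ne_1: "omega ^ 2 \<noteq> 1"
  unfolding omega_square by (simp add: omega_eq complex_eq_iff)

lemma omega_power_4_ne_1: "omega ^ 4 \<noteq> 1"
  unfolding omega_power_4 by (simp add: omega_eq complex_eq_iff)

lemma omega_power_shift_ne:
  "omega ^ (k + 2) \<noteq> omega ^ k" "omega ^ (k + 4) \<noteq> omega ^ (k + 2)" "omega ^ (k + 4) \<noteq> omega ^ k"
proof -
  have nonzero: "omega ^ n \<noteq> 0" for n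
    by (metis norm_omega norm_zero zero_neq_one power_not_zero)
  have shift: "omega ^ (n + j) \<noteq> omega ^ n" if "omega ^ j \<noteq> 1" for n j
    using that nonzero[of n] by (simp add: power_add)
  show "omega ^ (k + 2) \<noteq> omega ^ k" "omega ^ (k + 4) \<noteq> omega ^ k"
    using shift omega_square_ne_1 omega_power_4_ne_1 by blast+
  have "k + 4 = (k + 2) + 2" by simp
  then show "omega ^ (k + 4) \<noteq> omega ^ (k + 2)"
    using shift[OF omega_square_ne_1, of "k + 2"] by (simp only: not_False_eq_True)
qed

lemma lattice_pt_add: "lattice_pt (v + w) = lattice_pt v + lattice_pt w"
  by (simp add: lattice_pt_def algebra_simps)

lemma lattice_pt_zero [simp]: "lattice_pt 0 = 0"
  by (simp add: lattice_pt_def)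

lemma lattice_pt_unit_step: "lattice_pt (unit_step k) = omega ^ k"
proof -
  have "\<forall>r<6. lattice_pt ([(1, 0), (0, 1), (-1, 1), (-1, 0), (0, -1), (1, -1)] ! r) = omega ^ r"
    by (simp add: all_less_six lattice_pt_def omega_square omega_cube omega_power_4 omega_power_5)
  then show ?thesis
    by (simp add: unit_step_def omega_power_mod)
qed

lemma norm_lattice_pt_square: "(cmod (lattice_pt v))\<^sup>2 = of_int (lattice_norm v)"
proof -
  obtain a b where v: "v = (a, b)" by fastforce
  have "(cmod (lattice_pt v))\<^sup>2 = (of_int a + of_int b / 2)\<^sup>2 + (of_int b * sqrt 3 / 2)\<^sup>2"
    by (simp add: cmod_power2 lattice_pt_def omega_eq v)
  also have "\<dots> = of_int a ^ 2 + of_int a * of_int b + of_int b ^ 2 * ((sqrt 3)\<^sup>2 + 1) / 4"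
    by (simp add: power2_eq_square field_simps)
  also have "\<dots> = of_int (lattice_norm v)"
    by (simp add: lattice_norm_def v power2_eq_square)
  finally show ?thesis .
qed

lemma lattice_pt_in_Lambda: "lattice_pt v \<in> Lambda"
  by (auto simp: Lambda_def lattice_pt_def)

lemma norm_lattice_pt_le: "lattice_norm v \<le> n \<Longrightarrow> cmod (lattice_pt v) \<le> sqrt (of_int n)"
  by (simp add: real_le_rsqrt norm_lattice_pt_square)

lemma lattice_pt_in_VJ: "lattice_norm v \<le> 7 \<Longrightarrow> lattice_pt v \<in> VJ"
  using norm_lattice_pt_le[of v 7] by (simp add: VJ_def lattice_pt_in_Lambda)

lemma lattice_pt_in_centres: "lattice_norm v \<le> 3 \<Longrightarrow> lattice_pt v \<in> centres"
  using norm_lattice_pt_le[of v 3] by (simp add: centres_def lattice_pt_in_Lambda)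

lemma Lk_eq_lattice_pt: "Lk k = lattice_pt (unit_step k + unit_step k)"
  by (simp add: Lk_def lattice_pt_add lattice_pt_unit_step)

lemma rim_in_Hverts: "c + omega ^ k \<in> Hverts c"
proof -
  have "c + omega ^ k \<in> {c + omega ^ j | j. j < 6}"
    using omega_power_mod[of k] by (metis (mono_tags, lifting) mem_Collect_eq mod_less_divisor zero_less_numeral)
  then show ?thesis by (simp add: Hverts_def)
qed

lemma Lk_in_VJ: "Lk k \<in> VJ"
proof -
  have "cmod (Lk k) \<le> sqrt 7"
    using real_sqrt_le_mono[of 4 7] by (simp add: Lk_def norm_mult norm_power)
  then show ?thesis
    by (simp add: VJ_def Lk_eq_lattice_pt lattice_pt_in_Lambda)
qed

section \<open>Good colourings of \<open>J\<close>\<close>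

lemma less_four_eq_iff_bits:
  fixes c d :: nat
  assumes "c < 4" and "d < 4"
  shows "c = d \<longleftrightarrow> (odd c \<longleftrightarrow> odd d) \<and> (c < 2 \<longleftrightarrow> d < 2)"
  using assms by presburger

lemma J_linking_pattern_lattice:
  fixes g :: "int \<times> int \<Rightarrow> nat"
  assumes colour: "\<And>v. lattice_norm v \<le> 7 \<Longrightarrow> g v < 4"
    and proper: "\<And>v k. lattice_norm v \<le> 7 \<Longrightarrow> lattice_norm (v + unit_step k) \<le> 7 \<Longrightarrow>
                    g v \<noteq> g (v + unit_step k)"
    and rim: "\<And>c k. lattice_norm c \<le> 3 \<Longrightarrow>
                \<not> (g (c + unit_step k) = g (c + unit_step (k + 2)) \<and>
                   g (c + unit_step (k + 2)) = g (c + unit_step (k + 4)))"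
  shows "option_c_pattern (\<lambda>k. g (unit_step k + unit_step k)) (g 0) \<or>
         four_consecutive (\<lambda>k. g (unit_step k + unit_step k)) (g 0)"
proof -
  have box: "{-3..3::int} = {-3, -2, -1, 0, 1, 2, 3}" by auto
  have "\<forall>a\<in>{-3..3}. \<forall>b\<in>{-3..3}. lattice_norm (a, b) \<le> 7 \<longrightarrow> g (a, b) < 4"
    using colour by blast
  note colours = this[unfolded box, simplified lattice_norm_def, simplified]
  have "\<forall>a\<in>{-3..3}. \<forall>b\<in>{-3..3}. \<forall>k\<in>{0, 1, 2}. lattice_norm (a, b) \<le> 7 \<longrightarrow>
      lattice_norm ((a, b) + unit_step k) \<le> 7 \<longrightarrow> g (a, b) \<noteq> g ((a, b) + unit_step k)"
    using proper by blast
  note edges = this[unfolded box, simplified lattice_norm_def unit_step_def, simplified]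
  have "\<forall>a\<in>{-3..3}. \<forall>b\<in>{-3..3}. \<forall>k\<in>{0, 1}. lattice_norm (a, b) \<le> 3 \<longrightarrow>
      \<not> (g ((a, b) + unit_step k) = g ((a, b) + unit_step (k + 2)) \<and>
         g ((a, b) + unit_step (k + 2)) = g ((a, b) + unit_step (k + 4)))"
    using rim by blast
  note rims = this[unfolded box, simplified lattice_norm_def unit_step_def, simplified]
  \<comment> \<open>With each colour written as two bits, the 72 edge and 26 rim constraints form a
    propositional formula that implies the conclusion.\<close>
  show ?thesis
    unfolding option_c_pattern_iff four_consecutive_iff
    using edges rims
    by (simp (no_asm_use) add: unit_step_def zero_prod_def less_four_eq_iff_bits colours) satx
qed

lemma has_mono_tripleI:
  assumes "x \<in> S" "y \<in> S" "z \<in> S" "x \<noteq> y" "y \<noteq> z" "x \<noteq> z"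
    and "f x = f y" "f y = f z"
  shows "has_mono_triple f S"
  unfolding has_mono_triple_def
proof (intro exI conjI)
  show "{x, y, z} \<subseteq> S" "card {x, y, z} = 3" using assms by auto
  show "\<forall>w\<in>{x, y, z}. f w = f x" using assms by auto
qed

lemma J_linking_pattern:
  fixes h :: "complex \<Rightarrow> nat"
  assumes proper: "proper_4_colouring VJ h"
    and no_mono: "\<And>c. c \<in> centres \<Longrightarrow> \<not> has_mono_triple h (Hverts c)"
  shows "option_c_pattern (\<lambda>k. h (Lk k)) (h 0) \<or> four_consecutive (\<lambda>k. h (Lk k)) (h 0)"
proof -
  define g where "g = h \<circ> lattice_pt"
  have "option_c_pattern (\<lambda>k. g (unit_step k + unit_step k)) (g 0) \<or>
        four_consecutive (\<lambda>k. g (unit_step k + unit_step k)) (g 0)"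
  proof (rule J_linking_pattern_lattice)
    fix v assume "lattice_norm v \<le> 7"
    then show "g v < 4"
      using proper by (simp add: g_def proper_4_colouring_def lattice_pt_in_VJ)
  next
    fix v k assume "lattice_norm v \<le> 7" "lattice_norm (v + unit_step k) \<le> 7"
    moreover have "cmod (lattice_pt v - lattice_pt (v + unit_step k)) = 1"
      by (simp add: lattice_pt_add lattice_pt_unit_step norm_power)
    ultimately show "g v \<noteq> g (v + unit_step k)"
      using proper by (simp add: g_def proper_4_colouring_def lattice_pt_in_VJ)
  next
    fix c k assume "lattice_norm c \<le> 3"
    define z where "z j = lattice_pt c + omega ^ (k + j)" for j
    have "z 2 \<noteq> z 0" "z 4 \<noteq> z 2" "z 4 \<noteq> z 0"
      unfolding z_def add_left_cancel using omega_power_shift_ne by simp_all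
    moreover have "z j \<in> Hverts (lattice_pt c)" for j
      unfolding z_def by (rule rim_in_Hverts)
    ultimately have "\<not> (h (z 0) = h (z 2) \<and> h (z 2) = h (z 4))"
      using no_mono[OF lattice_pt_in_centres[OF \<open>lattice_norm c \<le> 3\<close>]] has_mono_tripleI
      by metis
    then show "\<not> (g (c + unit_step k) = g (c + unit_step (k + 2)) \<and>
                 g (c + unit_step (k + 2)) = g (c + unit_step (k + 4)))"
      by (simp add: g_def z_def lattice_pt_add lattice_pt_unit_step)
  qed
  then show ?thesis
    by (simp add: g_def Lk_eq_lattice_pt)
qed

section \<open>Copies of \<open>J\<close> inside \<open>K\<close>\<close>

lemma norm_Rot_diff: "cmod (Rot z - Rot w) = cmod (z - w)"
proof -
  have "Rot z - Rot w = cis (- (2 * arcsin (1 / 4))) * (z - w)"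
    by (simp add: Rot_def algebra_simps)
  then show ?thesis by (simp add: norm_mult)
qed

lemma inj_Rot: "inj Rot"
  by (rule injI) (simp add: Rot_def)

lemma Rot_zero [simp]: "Rot 0 = 0"
  by (simp add: Rot_def)

lemma norm_Lk_minus_Rot_Lk: "cmod (Lk k - Rot (Lk k)) = 1"
proof -
  define t where "t = 2 * arcsin (1 / 4 :: real)"
  have "cos t = 7 / 8"
    unfolding t_def cos_double_sin by (simp add: power2_eq_square)
  have "(cmod (1 - cis (- t)))\<^sup>2 = (1 - cos t)\<^sup>2 + (sin t)\<^sup>2"
    by (simp add: cmod_power2)
  also have "\<dots> = 2 - 2 * cos t"
    using sin_cos_squared_add[of t] by (simp add: power2_eq_square algebra_simps)
  also have "\<dots> = (1 / 2)\<^sup>2"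
    using \<open>cos t = 7 / 8\<close> by (simp add: power2_eq_square)
  finally have "(cmod (1 - cis (- t)))\<^sup>2 = (1 / 2)\<^sup>2" .
  then have "cmod (1 - cis (- t)) = 1 / 2"
    by (simp add: power2_eq_iff_nonneg)
  moreover have "Lk k - Rot (Lk k) = Lk k * (1 - cis (- t))"
    by (simp add: Rot_def t_def algebra_simps)
  ultimately show ?thesis
    by (simp add: norm_mult Lk_def norm_power)
qed

lemma proper_4_colouring_comp:
  assumes "proper_4_colouring W f" and "g ` V \<subseteq> W"
    and "\<And>z w. cmod (g z - g w) = cmod (z - w)"
  shows "proper_4_colouring V (f \<circ> g)"
  using assms unfolding proper_4_colouring_def by (simp add: image_subset_iff)

lemma has_mono_triple_comp:
  assumes "inj_on g S" and "has_mono_triple (f \<circ> g) S"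
  shows "has_mono_triple f (g ` S)"
proof -
  obtain T col where "T \<subseteq> S" "card T = 3" "\<forall>z\<in>T. f (g z) = col"
    using assms(2) unfolding has_mono_triple_def by auto
  moreover have "card (g ` T) = 3"
    using \<open>T \<subseteq> S\<close> \<open>card T = 3\<close> assms(1) by (simp add: card_image inj_on_subset)
  ultimately show ?thesis
    unfolding has_mono_triple_def by (intro exI[of _ "g ` T"]) auto
qed

lemma linking_pattern_in_copy:
  assumes "proper_4_colouring VK f" and "\<forall>S\<in>Hcopies. \<not> has_mono_triple f S"
    and "g ` VJ \<subseteq> VK" and "\<And>c. c \<in> centres \<Longrightarrow> g ` Hverts c \<in> Hcopies"
    and "inj g" and "\<And>z w. cmod (g z - g w) = cmod (z - w)"
  shows "option_c_pattern (\<lambda>k. f (g (Lk k))) (f (g 0)) \<or>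
         four_consecutive (\<lambda>k. f (g (Lk k))) (f (g 0))"
proof -
  have "proper_4_colouring VJ (f \<circ> g)"
    using proper_4_colouring_comp assms(1,3,6) by blast
  moreover have "\<not> has_mono_triple (f \<circ> g) (Hverts c)" if "c \<in> centres" for c
    using has_mono_triple_comp[OF inj_on_subset[OF \<open>inj g\<close> subset_UNIV]] assms(2,4) that by blast
  ultimately show ?thesis
    using J_linking_pattern[of "f \<circ> g"] by simp
qed

theorem mainTheorem4:
  fixes f :: "complex \<Rightarrow> nat"
  assumes "proper_4_colouring VK f"
    and "\<forall>S\<in>Hcopies. \<not> has_mono_triple f S"
  shows "option_c f id \<and> option_c f Rot \<and>
         (\<forall>k<3. f (Lk k) = f (Lk (k + 3)) \<and> f (Rot (Lk k)) = f (Rot (Lk (k + 3))))"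
proof -
  have J: "option_c_pattern (\<lambda>k. f (id (Lk k))) (f 0) \<or> four_consecutive (\<lambda>k. f (id (Lk k))) (f 0)"
    using linking_pattern_in_copy[OF assms, of id] by (simp add: VK_def Hcopies_def)
  have RJ: "option_c_pattern (\<lambda>k. f (Rot (Lk k))) (f 0) \<or> four_consecutive (\<lambda>k. f (Rot (Lk k))) (f 0)"
    using linking_pattern_in_copy[OF assms, of Rot]
    by (simp add: VK_def Hcopies_def inj_Rot norm_Rot_diff)
  have "f (id (Lk k)) \<noteq> f (Rot (Lk k))" for k
    using assms(1) Lk_in_VJ norm_Lk_minus_Rot_Lk unfolding proper_4_colouring_def VK_def by simp
  then have "option_c_pattern (\<lambda>k. f (id (Lk k))) (f 0) \<and> option_c_pattern (\<lambda>k. f (Rot (Lk k))) (f 0)"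
    using option_c_patterns_if_disjoint[OF J RJ] by blast
  then show ?thesis
    using option_c_if_pattern option_c_pattern_diagonals by fastforce
qed

end
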